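(* Let $0<a,b<1$, $r>as$, $s>br$, and consider the autonomous system $(x_{n+1},y_{n+1})=T_{\alpha,\beta}(x_n,y_n)$ with constant $\alpha,\beta\in[0,1)$. (a) If $p_\alpha+q_\beta<4$ and $2-p_\alpha-q_\beta+\frac{p_\alpha q_\beta(1-ab)}{2}>0$, then the positive equilibrium $K=(p,q)$ is locally asymptotically stable. (b) If $\alpha\in(\alpha_*,1)$ and $\beta\in(\beta_*,1)$, where $$\alpha_*=\max\{1-2/p,\,0\},\qquad \beta_*=\max\Big\{1-\frac{2}{q(1-ab)}-\frac{4ab}{q(1-ab)[(1-\alpha)(1-ab)p-2]},\,0\Big\}\in[0,1),$$ then both inequalities in (a) hold, so $K$ is locally asymptotically stable.
   Context: $p=\frac{r-as}{1-ab}$, $q=\frac{s-br}{1-ab}$, $K=(p,q)$. $T_{\alpha,\beta}(x,y)=\big(x[(1-\alpha)e^{r-x-ay}+\alpha],\,y[(1-\beta)e^{s-bx-y}+\beta]\big)$. $p_\alpha=(1-\alpha)p$, $q_\beta=(1-\beta)q$. *)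

theory Defs
  imports "HOL-Analysis.Analysis"
begin

definition Tmap :: "real \<Rightarrow> real \<Rightarrow> real \<Rightarrow> real \<Rightarrow> real \<Rightarrow> real \<Rightarrow> real \<times> real \<Rightarrow> real \<times> real" where
  "Tmap a b r s \<alpha> \<beta> = (\<lambda>(x, y).
     (x * ((1 - \<alpha>) * exp (r - x - a * y) + \<alpha>),
      y * ((1 - \<beta>) * exp (s - b * x - y) + \<beta>)))"

definition eq_p :: "real \<Rightarrow> real \<Rightarrow> real \<Rightarrow> real \<Rightarrow> real" where
  "eq_p a b r s = (r - a * s) / (1 - a * b)"

definition eq_q :: "real \<Rightarrow> real \<Rightarrow> real \<Rightarrow> real \<Rightarrow> real" where
  "eq_q a b r s = (s - b * r) / (1 - a * b)"

definition loc_asym_stable :: "('a::metric_space \<Rightarrow> 'a) \<Rightarrow> 'a \<Rightarrow> bool" where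
  "loc_asym_stable f K \<longleftrightarrow>
     f K = K \<and>
     (\<forall>\<epsilon>>0. \<exists>\<delta>>0. \<forall>z. dist z K < \<delta> \<longrightarrow> (\<forall>n. dist ((f ^^ n) z) K < \<epsilon>)) \<and>
     (\<exists>\<eta>>0. \<forall>z. dist z K < \<eta> \<longrightarrow> (\<lambda>n. (f ^^ n) z) \<longlonglongrightarrow> K)"

end

(*
  At K the Jacobian of T is J = [[1 - P, -a P], [-b Q, 1 - Q]] with P = p_alpha, Q = q_beta, so
  tr J = 2 - P - Q and det J = 1 - P - Q + P Q (1 - ab). The hypotheses of (a) are the Jury conditions
  |tr J| < 1 + det J < 2: 1 + det J - tr J = P Q (1 - ab), 1 + det J + tr J is twice the second
  hypothesis, and det J < 1 because P Q (1 - ab) < P Q <= (P + Q)^2 / 4 < P + Q. Under these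
  conditions an explicit solution of the Stein equation for the companion form of J is a positive
  definite quadratic form strictly contracted by J. Since T agrees with K + J (z - K) to first order,
  this form is a strict Lyapunov function for T near K.
  Part (b) is algebra: alpha > alpha_* means P < 2, and beta > beta_* is equivalent to the second
  hypothesis of (a), which together with P < 2 forces Q < 2.
*)
theory Submission
  imports Defs
begin

section \<open>Stability from a quadratic Lyapunov function\<close>

lemma loc_asym_stable_if_Lyapunov_decrease:
  fixes f :: "'a::real_normed_vector \<Rightarrow> 'a" and V :: "'a \<Rightarrow> real"
  assumes fixed: "f K = K"
    and m: "0 < m" and lower: "\<And>w. m * norm w ^ 2 \<le> V w"
    and upper: "\<And>w. V w \<le> M * norm w ^ 2"
    and \<delta>: "0 < \<delta>" and \<mu>: "0 \<le> \<mu>" "\<mu> < 1"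
    and decrease: "\<And>z. norm (z - K) < \<delta> \<Longrightarrow> V (f z - K) \<le> \<mu> * V (z - K)"
  shows "loc_asym_stable f K"
proof -
  define R where "R = max M m / m"
  have R: "1 \<le> R" using m by (simp add: R_def)
  have norm_sq_le: "norm w ^ 2 \<le> V w / m" for w
    using lower[of w] m by (simp add: field_simps)
  have V_le: "V w / m \<le> R * norm w ^ 2" for w
  proof -
    have "V w \<le> max M m * norm w ^ 2"
      using upper[of w] by (meson max.cobounded1 mult_right_mono order_trans zero_le_power2)
    thus ?thesis using m by (simp add: R_def field_simps)
  qed
  have decay: "V ((f ^^ n) z - K) \<le> \<mu> ^ n * V (z - K)"
    if z: "R * norm (z - K) ^ 2 < \<delta> ^ 2" for z n
  proof (induction n)
    case 0
    show ?case by simp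
  next
    case (Suc n)
    have "0 \<le> V (z - K)"
      using lower[of "z - K"] m by (meson order_trans zero_le_mult_iff zero_le_power2 less_imp_le)
    have "norm ((f ^^ n) z - K) ^ 2 \<le> V ((f ^^ n) z - K) / m" by (rule norm_sq_le)
    also have "\<dots> \<le> \<mu> ^ n * V (z - K) / m" using Suc.IH m by (simp add: divide_right_mono)
    also have "\<dots> \<le> V (z - K) / m"
      using \<open>0 \<le> V (z - K)\<close> \<mu> m by (intro divide_right_mono mult_left_le_one_le power_le_one) auto
    also have "\<dots> \<le> R * norm (z - K) ^ 2" by (rule V_le)
    also have "\<dots> < \<delta> ^ 2" by (rule z)
    finally have "norm ((f ^^ n) z - K) < \<delta>" using \<delta> by (simp add: power_less_imp_less_base)
    hence "V ((f ^^ Suc n) z - K) \<le> \<mu> * V ((f ^^ n) z - K)" by (simp add: decrease)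
    also have "\<dots> \<le> \<mu> ^ Suc n * V (z - K)" using Suc.IH \<mu> by (simp add: mult.assoc mult_left_mono)
    finally show ?case .
  qed
  have orbit: "norm ((f ^^ n) z - K) ^ 2 \<le> \<mu> ^ n * (R * norm (z - K) ^ 2)"
    if "R * norm (z - K) ^ 2 < \<delta> ^ 2" for z n
  proof -
    have "norm ((f ^^ n) z - K) ^ 2 \<le> V ((f ^^ n) z - K) / m" by (rule norm_sq_le)
    also have "\<dots> \<le> \<mu> ^ n * (V (z - K) / m)" using decay[OF that, of n] m by (simp add: divide_right_mono)
    also have "\<dots> \<le> \<mu> ^ n * (R * norm (z - K) ^ 2)" using V_le \<mu> by (intro mult_left_mono) auto
    finally show ?thesis .
  qed
  have small: "R * norm (z - K) ^ 2 < \<rho> ^ 2" if "dist z K < \<rho> / sqrt R" "0 < \<rho>" for z \<rho>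
  proof -
    have "sqrt R * norm (z - K) < \<rho>" using that R by (simp add: dist_norm field_simps)
    hence "(sqrt R * norm (z - K)) ^ 2 < \<rho> ^ 2"
      using R by (intro power_strict_mono) auto
    thus ?thesis using R by (simp add: power_mult_distrib)
  qed
  have stable: "\<exists>\<eta>>0. \<forall>z. dist z K < \<eta> \<longrightarrow> (\<forall>n. dist ((f ^^ n) z) K < \<epsilon>)"
    if "0 < \<epsilon>" for \<epsilon>
  proof (intro exI conjI allI impI)
    show "0 < min \<delta> \<epsilon> / sqrt R" using that \<delta> R by simp
    fix z n assume "dist z K < min \<delta> \<epsilon> / sqrt R"
    hence z: "R * norm (z - K) ^ 2 < (min \<delta> \<epsilon>) ^ 2" using small that \<delta> by simp
    have "(min \<delta> \<epsilon>) ^ 2 \<le> \<delta> ^ 2" "(min \<delta> \<epsilon>) ^ 2 \<le> \<epsilon> ^ 2"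
      using that \<delta> by (simp_all add: power_mono)
    hence "R * norm (z - K) ^ 2 < \<delta> ^ 2" "R * norm (z - K) ^ 2 < \<epsilon> ^ 2" using z by linarith+
    have "norm ((f ^^ n) z - K) ^ 2 \<le> \<mu> ^ n * (R * norm (z - K) ^ 2)"
      by (rule orbit) fact
    also have "\<dots> \<le> R * norm (z - K) ^ 2"
      using \<mu> R by (intro mult_left_le_one_le power_le_one) auto
    also have "\<dots> < \<epsilon> ^ 2" by fact
    finally show "dist ((f ^^ n) z) K < \<epsilon>"
      using that by (simp add: dist_norm power_less_imp_less_base)
  qed
  have attracting: "\<exists>\<eta>>0. \<forall>z. dist z K < \<eta> \<longrightarrow> (\<lambda>n. (f ^^ n) z) \<longlonglongrightarrow> K"
  proof (intro exI conjI allI impI)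
    show "0 < \<delta> / sqrt R" using \<delta> R by simp
    fix z assume "dist z K < \<delta> / sqrt R"
    hence z: "R * norm (z - K) ^ 2 < \<delta> ^ 2" using small \<delta> by simp
    define g where "g n = sqrt (\<mu> ^ n * (R * norm (z - K) ^ 2))" for n
    have "(\<lambda>n. \<mu> ^ n * (R * norm (z - K) ^ 2)) \<longlonglongrightarrow> 0 * (R * norm (z - K) ^ 2)"
      using \<mu> by (intro tendsto_mult_right LIMSEQ_power_zero) auto
    hence g: "g \<longlonglongrightarrow> 0" unfolding g_def using tendsto_real_sqrt by fastforce
    have "\<forall>n. norm ((f ^^ n) z - K) \<le> g n"
      using orbit[OF z] by (simp add: g_def real_le_rsqrt)
    hence "\<forall>\<^sub>F n in sequentially. norm ((f ^^ n) z - K) \<le> g n" by (rule always_eventually)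
    from Lim_null_comparison[OF this g] have "(\<lambda>n. (f ^^ n) z - K) \<longlonglongrightarrow> 0" .
    thus "(\<lambda>n. (f ^^ n) z) \<longlonglongrightarrow> K" by (rule LIM_zero_cancel)
  qed
  show ?thesis unfolding loc_asym_stable_def using fixed stable attracting by blast
qed

lemma Lyapunov_decrease_near_fixpoint:
  fixes f L :: "'a::real_normed_vector \<Rightarrow> 'a" and V :: "'a \<Rightarrow> real"
  assumes deriv: "(f has_derivative L) (at K)" and fixed: "f K = K"
    and m: "0 < m" and lower: "\<And>w. m * norm w ^ 2 \<le> V w"
    and linear_decrease: "\<And>w. V (L w) \<le> \<mu> * V w" and \<mu>: "\<mu> < 1"
    and perturb: "\<And>x e. V (x + e) \<le> V x + C * (norm x * norm e + norm e ^ 2)" and C: "0 \<le> C"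
  shows "\<exists>\<delta>>0. \<forall>z. norm (z - K) < \<delta> \<longrightarrow> V (f z - K) \<le> (1 + \<mu>) / 2 * V (z - K)"
proof -
  obtain B where B: "0 < B" "\<And>w. norm (L w) \<le> norm w * B"
    using deriv has_derivative_bounded_linear bounded_linear.pos_bounded by blast
  define \<epsilon> where "\<epsilon> = min 1 ((1 - \<mu>) * m / (2 * (C + 1) * (B + 1)))"
  have \<epsilon>: "0 < \<epsilon>" "\<epsilon> \<le> 1" using \<mu> m C B by (simp_all add: \<epsilon>_def)
  have C\<epsilon>: "C * (B + 1) * \<epsilon> \<le> (1 - \<mu>) / 2 * m"
  proof -
    have "\<epsilon> \<le> (1 - \<mu>) * m / (2 * (C + 1) * (B + 1))" by (simp add: \<epsilon>_def)
    hence "\<epsilon> * (2 * (C + 1) * (B + 1)) \<le> (1 - \<mu>) * m"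
      using C B by (simp add: pos_le_divide_eq)
    moreover have "C * (B + 1) * \<epsilon> \<le> (C + 1) * (B + 1) * \<epsilon>"
      using \<epsilon> B by (intro mult_right_mono) auto
    ultimately show ?thesis by (simp add: algebra_simps)
  qed
  obtain \<delta> where \<delta>: "0 < \<delta>"
    and remainder: "\<And>z. norm (z - K) < \<delta> \<Longrightarrow> norm (f z - K - L (z - K)) \<le> \<epsilon> * norm (z - K)"
    using deriv \<epsilon>(1) fixed unfolding has_derivative_at_alt by metis
  show ?thesis
  proof (intro exI conjI allI impI)
    fix z assume z: "norm (z - K) < \<delta>"
    define w e where "w = z - K" and "e = f z - K - L (z - K)"
    have e: "norm e \<le> \<epsilon> * norm w" using remainder[OF z] by (simp add: e_def w_def)
    have "norm (L w) * norm e + norm e ^ 2 \<le> (B * norm w) * (\<epsilon> * norm w) + (\<epsilon> * norm w) ^ 2"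
      using B e by (intro add_mono mult_mono power_mono) (auto simp: mult.commute)
    also have "\<dots> = (B + \<epsilon>) * \<epsilon> * norm w ^ 2" by (simp add: power2_eq_square algebra_simps)
    also have "\<dots> \<le> (B + 1) * \<epsilon> * norm w ^ 2" using \<epsilon> by (intro mult_right_mono) auto
    finally have "C * (norm (L w) * norm e + norm e ^ 2) \<le> C * (B + 1) * \<epsilon> * norm w ^ 2"
      using C by (simp add: mult_left_mono mult.assoc)
    also have "\<dots> \<le> (1 - \<mu>) / 2 * (m * norm w ^ 2)"
      using mult_right_mono[OF C\<epsilon>, of "norm w ^ 2"] by (simp add: mult.assoc)
    also have "\<dots> \<le> (1 - \<mu>) / 2 * V w" using lower \<mu> by (intro mult_left_mono) auto
    finally have small: "C * (norm (L w) * norm e + norm e ^ 2) \<le> (1 - \<mu>) / 2 * V w" .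
    have "V (f z - K) = V (L w + e)" by (simp add: e_def w_def)
    also have "\<dots> \<le> V (L w) + C * (norm (L w) * norm e + norm e ^ 2)" by (rule perturb)
    also have "\<dots> \<le> (1 + \<mu>) / 2 * V w" using linear_decrease[of w] small by argo
    finally show "V (f z - K) \<le> (1 + \<mu>) / 2 * V (z - K)" by (simp add: w_def)
  qed (fact \<delta>)
qed

section \<open>Quadratic forms on the plane and the Jury criterion\<close>

definition qbil :: "real \<Rightarrow> real \<Rightarrow> real \<Rightarrow> real \<times> real \<Rightarrow> real \<times> real \<Rightarrow> real" where
  "qbil A B C v w = A * fst v * fst w + B * (fst v * snd w + snd v * fst w) + C * snd v * snd w"

definition qform :: "real \<Rightarrow> real \<Rightarrow> real \<Rightarrow> real \<times> real \<Rightarrow> real" where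
  "qform A B C w = qbil A B C w w"

lemma qform_Pair: "qform A B C (x, y) = A * x\<^sup>2 + 2 * B * x * y + C * y\<^sup>2"
  by (simp add: qform_def qbil_def power2_eq_square algebra_simps)

lemma norm_Pair_sq: "norm (x :: real, y :: real) ^ 2 = x\<^sup>2 + y\<^sup>2"
  by (simp add: norm_Pair)

lemma abs_qbil_le: "\<bar>qbil A B C v w\<bar> \<le> (\<bar>A\<bar> + 2 * \<bar>B\<bar> + \<bar>C\<bar>) * (norm v * norm w)"
proof -
  define N where "N = norm v * norm w"
  have coord: "\<bar>fst z\<bar> \<le> norm z" "\<bar>snd z\<bar> \<le> norm z" for z :: "real \<times> real"
    using norm_fst_le[of "fst z" "snd z"] norm_snd_le[of "snd z" "fst z"] by simp_all
  have prod: "\<bar>s * t\<bar> \<le> N" if "\<bar>s\<bar> \<le> norm v" "\<bar>t\<bar> \<le> norm w" for s t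
    unfolding N_def abs_mult using that by (intro mult_mono) auto
  have tri: "\<bar>X + Y + Z\<bar> \<le> \<bar>X\<bar> + \<bar>Y\<bar> + \<bar>Z\<bar>" for X Y Z :: real
    by (rule order_trans[OF abs_triangle_ineq add_right_mono[OF abs_triangle_ineq]])
  have mixed: "\<bar>fst v * snd w + snd v * fst w\<bar> \<le> N + N"
    by (rule order_trans[OF abs_triangle_ineq add_mono]) (simp_all add: prod coord)
  have "\<bar>qbil A B C v w\<bar> \<le> \<bar>A\<bar> * \<bar>fst v * fst w\<bar>
      + \<bar>B\<bar> * \<bar>fst v * snd w + snd v * fst w\<bar> + \<bar>C\<bar> * \<bar>snd v * snd w\<bar>"
    unfolding qbil_def mult.assoc abs_mult[symmetric] by (rule tri)
  also have "\<dots> \<le> \<bar>A\<bar> * N + \<bar>B\<bar> * (N + N) + \<bar>C\<bar> * N"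
    using mixed by (intro add_mono mult_left_mono) (simp_all add: prod coord)
  finally show ?thesis by (simp add: N_def algebra_simps)
qed

lemma qform_le: "qform A B C w \<le> (\<bar>A\<bar> + 2 * \<bar>B\<bar> + \<bar>C\<bar>) * norm w ^ 2"
  using abs_qbil_le[of A B C w w] by (simp add: qform_def power2_eq_square)

lemma qform_ge:
  assumes "0 < A + C"
  shows "(A * C - B\<^sup>2) / (A + C) * norm w ^ 2 \<le> qform A B C w"
proof (cases w)
  case (Pair x y)
  have "(A + C) * qform A B C w - (A * C - B\<^sup>2) * (x\<^sup>2 + y\<^sup>2) = (A * x + B * y)\<^sup>2 + (B * x + C * y)\<^sup>2"
    by (simp add: Pair qform_Pair power2_eq_square algebra_simps)
  moreover have "0 \<le> (A * x + B * y)\<^sup>2 + (B * x + C * y)\<^sup>2" by simp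
  ultimately have "(A * C - B\<^sup>2) * norm w ^ 2 \<le> (A + C) * qform A B C w"
    unfolding Pair norm_Pair_sq by linarith
  thus ?thesis using assms by (simp add: divide_le_eq mult.commute)
qed

lemma qform_add_le:
  "qform A B C (x + e)
     \<le> qform A B C x + 2 * (\<bar>A\<bar> + 2 * \<bar>B\<bar> + \<bar>C\<bar>) * (norm x * norm e + norm e ^ 2)"
proof -
  define G where "G = \<bar>A\<bar> + 2 * \<bar>B\<bar> + \<bar>C\<bar>"
  have "qform A B C (x + e) = qform A B C x + 2 * qbil A B C x e + qform A B C e"
    by (simp add: qform_def qbil_def algebra_simps)
  also have "\<dots> \<le> qform A B C x + 2 * (G * (norm x * norm e)) + G * norm e ^ 2"
    using abs_qbil_le[of A B C x e] qform_le[of A B C e] by (simp add: G_def abs_le_iff)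
  also have "\<dots> \<le> qform A B C x + 2 * G * (norm x * norm e + norm e ^ 2)"
    using mult_nonneg_nonneg[of G "norm e ^ 2"] by (simp add: G_def algebra_simps)
  finally show ?thesis by (simp add: G_def)
qed

definition lin2 :: "real \<Rightarrow> real \<Rightarrow> real \<Rightarrow> real \<Rightarrow> real \<times> real \<Rightarrow> real \<times> real" where
  "lin2 l11 l12 l21 l22 w = (l11 * fst w + l12 * snd w, l21 * fst w + l22 * snd w)"

lemma companion_Lyapunov_qform:
  fixes t d :: real
  assumes Jury: "\<bar>t\<bar> < 1 + d" "d < 1"
  obtains A B C \<mu> where "0 < A" "B\<^sup>2 < A * C" "0 \<le> \<mu>" "\<mu> < 1"
    and "\<And>u v. qform A B C (v, t * v - d * u) \<le> \<mu> * qform A B C (u, v)"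
proof -
  define k where "k = (1 - d) * ((1 + d)\<^sup>2 - t\<^sup>2) / 2"
  define A B C where "A = k + (1 + d) * d\<^sup>2" and "B = - t * d" and "C = 1 + d"
  have "(1 + d)\<^sup>2 - t\<^sup>2 = (1 + d - \<bar>t\<bar>) * (1 + d + \<bar>t\<bar>)"
    using power2_abs[of t] by (simp add: power2_eq_square algebra_simps)
  hence disc: "0 < (1 + d)\<^sup>2 - t\<^sup>2" using Jury by simp
  hence k: "0 < k" using Jury by (simp add: k_def)
  have C: "0 < C" using Jury by (simp add: C_def)
  have A: "0 < A" using k C by (simp add: A_def C_def add_pos_nonneg)
  have "A * C - B\<^sup>2 = k * C + d\<^sup>2 * ((1 + d)\<^sup>2 - t\<^sup>2)"
    by (simp add: A_def B_def C_def power2_eq_square algebra_simps)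
  moreover have "0 < k * C" "0 \<le> d\<^sup>2 * ((1 + d)\<^sup>2 - t\<^sup>2)" using k C disc by simp_all
  ultimately have det: "B\<^sup>2 < A * C" by linarith
  \<comment> \<open>(A, B, C) solves the Stein equation W - \<Gamma>^T W \<Gamma> = k I
    for the companion matrix \<Gamma> = [[0, 1], [-d, t]].\<close>
  have Stein: "qform A B C (v, t * v - d * u) = qform A B C (u, v) - k * (u\<^sup>2 + v\<^sup>2)" for u v
    by (simp add: A_def B_def C_def k_def qform_Pair power2_eq_square field_simps)
  define G where "G = \<bar>A\<bar> + 2 * \<bar>B\<bar> + \<bar>C\<bar>"
  have G: "0 < G" using A by (simp add: G_def)
  have "qform A B C (v, t * v - d * u) \<le> max 0 (1 - k / G) * qform A B C (u, v)" for u v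
  proof -
    have "0 \<le> (A * C - B\<^sup>2) / (A + C) * norm (u, v) ^ 2" using A C det by simp
    also have "\<dots> \<le> qform A B C (u, v)" using A C by (intro qform_ge) simp
    finally have nonneg: "0 \<le> qform A B C (u, v)" .
    have "qform A B C (u, v) / G \<le> u\<^sup>2 + v\<^sup>2"
      using qform_le[of A B C "(u, v)"] G by (simp add: G_def norm_Pair_sq divide_le_eq mult.commute)
    hence "k * (qform A B C (u, v) / G) \<le> k * (u\<^sup>2 + v\<^sup>2)"
      using k by (intro mult_left_mono) auto
    hence "qform A B C (v, t * v - d * u) \<le> (1 - k / G) * qform A B C (u, v)"
      unfolding Stein by (simp add: algebra_simps)
    also have "\<dots> \<le> max 0 (1 - k / G) * qform A B C (u, v)"
      using nonneg by (intro mult_right_mono) auto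
    finally show ?thesis .
  qed
  moreover have "max 0 (1 - k / G) < 1" using k G by simp
  ultimately show thesis using that A det by (meson max.cobounded1)
qed

lemma Jury_Lyapunov_qform:
  fixes l11 l12 l21 l22 :: real
  assumes l12: "l12 \<noteq> 0"
    and Jury: "\<bar>l11 + l22\<bar> < 1 + (l11 * l22 - l12 * l21)" "l11 * l22 - l12 * l21 < 1"
  obtains A B C \<mu> where "0 < A" "B\<^sup>2 < A * C" "0 \<le> \<mu>" "\<mu> < 1"
    and "\<And>w. qform A B C (lin2 l11 l12 l21 l22 w) \<le> \<mu> * qform A B C w"
proof -
  define L t d where "L = lin2 l11 l12 l21 l22" and "t = l11 + l22" and "d = l11 * l22 - l12 * l21"
  obtain A0 B0 C0 \<mu> where A0: "0 < A0" and det0: "B0\<^sup>2 < A0 * C0" and \<mu>: "0 \<le> \<mu>" "\<mu> < 1"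
    and decrease: "\<And>u v. qform A0 B0 C0 (v, t * v - d * u) \<le> \<mu> * qform A0 B0 C0 (u, v)"
    using Jury unfolding t_def[symmetric] d_def[symmetric] by (rule companion_Lyapunov_qform) blast
  \<comment> \<open>By Cayley-Hamilton, L^2 = t L - d I, so w \<mapsto> (fst w, fst (L w)) conjugates L to the companion
    matrix; it is invertible because l12 \<noteq> 0.\<close>
  have Cayley_Hamilton: "fst (L (L w)) = t * fst (L w) - d * fst w" for w
    by (simp add: L_def lin2_def t_def d_def algebra_simps)
  define A B C where "A = A0 + 2 * B0 * l11 + C0 * l11\<^sup>2" and "B = B0 * l12 + C0 * l11 * l12"
    and "C = C0 * l12\<^sup>2"
  have pullback: "qform A B C w = qform A0 B0 C0 (fst w, fst (L w))" for w
    by (simp add: A_def B_def C_def L_def lin2_def qform_def qbil_def power2_eq_square algebra_simps)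
  have "A * C - B\<^sup>2 = l12\<^sup>2 * (A0 * C0 - B0\<^sup>2)"
    by (simp add: A_def B_def C_def power2_eq_square algebra_simps)
  moreover have "0 < l12\<^sup>2 * (A0 * C0 - B0\<^sup>2)" using l12 det0 by simp
  ultimately have det: "B\<^sup>2 < A * C" by linarith
  have "0 < A0 * C0" using det0 zero_le_power2[of B0] by linarith
  hence "0 < C0" using A0 by (simp add: zero_less_mult_iff)
  hence "0 < C" using l12 by (simp add: C_def)
  moreover have "0 < A * C" using det zero_le_power2[of B] by linarith
  ultimately have "0 < A" by (simp add: zero_less_mult_iff)
  moreover have "qform A B C (L w) \<le> \<mu> * qform A B C w" for w
    using decrease[where u = "fst w" and v = "fst (L w)"] by (simp add: pullback Cayley_Hamilton)
  ultimately show thesis using that det \<mu> by (simp add: L_def)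
qed

lemma loc_asym_stable_if_Jury:
  fixes f :: "real \<times> real \<Rightarrow> real \<times> real"
  assumes deriv: "(f has_derivative lin2 l11 l12 l21 l22) (at K)" and fixed: "f K = K"
    and "l12 \<noteq> 0"
    and "\<bar>l11 + l22\<bar> < 1 + (l11 * l22 - l12 * l21)" "l11 * l22 - l12 * l21 < 1"
  shows "loc_asym_stable f K"
proof -
  obtain A B C \<mu> where A: "0 < A" and det: "B\<^sup>2 < A * C" and \<mu>: "0 \<le> \<mu>" "\<mu> < 1"
    and decrease: "\<And>w. qform A B C (lin2 l11 l12 l21 l22 w) \<le> \<mu> * qform A B C w"
    using assms(3-5) by (rule Jury_Lyapunov_qform) blast
  have "0 < A * C" using det zero_le_power2[of B] by linarith
  hence "0 < C" using A by (simp add: zero_less_mult_iff)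
  define m where "m = (A * C - B\<^sup>2) / (A + C)"
  have m: "0 < m" using A \<open>0 < C\<close> det by (simp add: m_def)
  have lower: "m * norm w ^ 2 \<le> qform A B C w" for w
    unfolding m_def using A \<open>0 < C\<close> by (intro qform_ge) simp
  obtain \<delta> where \<delta>: "0 < \<delta>" and decrease_near_K:
      "\<And>z. norm (z - K) < \<delta> \<Longrightarrow> qform A B C (f z - K) \<le> (1 + \<mu>) / 2 * qform A B C (z - K)"
    using Lyapunov_decrease_near_fixpoint[OF deriv fixed m lower decrease \<mu>(2) qform_add_le] by auto
  show ?thesis
    by (rule loc_asym_stable_if_Lyapunov_decrease[where f = f and K = K and V = "qform A B C",
          OF fixed m lower qform_le[of A B C] \<delta> _ _ decrease_near_K])
      (use \<mu> in simp_all)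
qed

lemma eq_p_eq_q_solve:
  assumes "a * b \<noteq> 1"
  shows "eq_p a b r s + a * eq_q a b r s = r" and "b * eq_p a b r s + eq_q a b r s = s"
proof -
  have "1 - a * b \<noteq> 0" using assms by simp
  moreover have "eq_p a b r s + a * eq_q a b r s = (r - a * s + a * (s - b * r)) / (1 - a * b)"
    and "b * eq_p a b r s + eq_q a b r s = (b * (r - a * s) + (s - b * r)) / (1 - a * b)"
    by (simp_all add: eq_p_def eq_q_def add_divide_distrib)
  moreover have "r - a * s + a * (s - b * r) = r * (1 - a * b)"
    and "b * (r - a * s) + (s - b * r) = s * (1 - a * b)"
    by (simp_all add: algebra_simps)
  ultimately show "eq_p a b r s + a * eq_q a b r s = r" "b * eq_p a b r s + eq_q a b r s = s"
    by simp_all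
qed

lemma Tmap_fixed_point:
  assumes "p + a * q = r" "b * p + q = s"
  shows "Tmap a b r s \<alpha> \<beta> (p, q) = (p, q)"
proof -
  have "r - p - a * q = 0" "s - b * p - q = 0" using assms by simp_all
  thus ?thesis by (simp add: Tmap_def)
qed

lemma Tmap_has_derivative:
  fixes a b r s \<alpha> \<beta> p q :: real
  assumes "p + a * q = r" "b * p + q = s"
  defines "P \<equiv> (1 - \<alpha>) * p" and "Q \<equiv> (1 - \<beta>) * q"
  shows "(Tmap a b r s \<alpha> \<beta> has_derivative lin2 (1 - P) (- a * P) (- b * Q) (1 - Q)) (at (p, q))"
proof -
  have Tmap_fst_snd: "Tmap a b r s \<alpha> \<beta> =
      (\<lambda>z. (fst z * ((1 - \<alpha>) * exp (r - fst z - a * snd z) + \<alpha>),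
            snd z * ((1 - \<beta>) * exp (s - b * fst z - snd z) + \<beta>)))"
    by (simp add: Tmap_def fun_eq_iff split_def)
  show ?thesis
    unfolding Tmap_fst_snd
    by (rule has_derivative_eq_rhs, (rule derivative_eq_intros refl)+)
      (simp add: fun_eq_iff lin2_def P_def Q_def assms(1,2)[symmetric] algebra_simps)
qed

lemma Tmap_loc_asym_stable:
  fixes a b r s \<alpha> \<beta> p q :: real
  assumes equilibrium: "p + a * q = r" "b * p + q = s"
    and a: "a \<noteq> 0" and ab: "0 \<le> a * b" "a * b < 1"
  defines "P \<equiv> (1 - \<alpha>) * p" and "Q \<equiv> (1 - \<beta>) * q"
  assumes P: "0 < P" and Q: "0 < Q" and sum: "P + Q < 4"
    and cond: "2 - P - Q + P * Q * (1 - a * b) / 2 > 0"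
  shows "loc_asym_stable (Tmap a b r s \<alpha> \<beta>) (p, q)"
proof -
  define c where "c = 1 - a * b"
  have c: "0 < c" "c \<le> 1" using ab by (simp_all add: c_def)
  have det: "(1 - P) * (1 - Q) - (- a * P) * (- b * Q) = 1 - P - Q + P * Q * c"
    by (simp add: c_def algebra_simps)
  have "0 < P * Q * c" using P Q c by simp
  moreover have "0 < 2 - P - Q + P * Q * c / 2" using cond by (simp add: c_def)
  ultimately have trace: "\<bar>(1 - P) + (1 - Q)\<bar> < 1 + ((1 - P) * (1 - Q) - (- a * P) * (- b * Q))"
    unfolding det by (simp add: abs_less_iff)
  have "P * Q * c \<le> P * Q" using P Q c by (simp add: mult_le_cancel_left1)
  also have "\<dots> \<le> (P + Q)\<^sup>2 / 4" using zero_le_power2[of "P - Q"] by (simp add: power2_eq_square algebra_simps)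
  also have "\<dots> < P + Q"
    using mult_strict_right_mono[OF sum, of "P + Q"] P Q by (simp add: power2_eq_square)
  finally have "(1 - P) * (1 - Q) - (- a * P) * (- b * Q) < 1" unfolding det by simp
  moreover have "- a * P \<noteq> 0" using a P by simp
  ultimately show ?thesis
    using loc_asym_stable_if_Jury[OF Tmap_has_derivative[OF equilibrium] Tmap_fixed_point[OF equilibrium]] trace
    by (simp add: P_def Q_def)
qed

lemma stability_conditions_above_thresholds:
  fixes p q a b \<alpha> \<beta> :: real
  assumes p: "0 < p" and q: "0 < q" and ab: "0 \<le> a * b" "a * b < 1" and "\<alpha> < 1"
  defines "\<beta>\<^sub>s \<equiv> 1 - 2 / (q * (1 - a * b))
                   - 4 * a * b / (q * (1 - a * b) * ((1 - \<alpha>) * (1 - a * b) * p - 2))"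
  assumes \<alpha>: "1 - 2 / p < \<alpha>" and \<beta>: "\<beta>\<^sub>s < \<beta>"
  shows "\<beta>\<^sub>s < 1" and "(1 - \<alpha>) * p + (1 - \<beta>) * q < 4"
    and "2 - (1 - \<alpha>) * p - (1 - \<beta>) * q + (1 - \<alpha>) * p * ((1 - \<beta>) * q) * (1 - a * b) / 2 > 0"
proof -
  define c P Q where "c = 1 - a * b" and "P = (1 - \<alpha>) * p" and "Q = (1 - \<beta>) * q"
  have c: "0 < c" "c \<le> 1" using ab by (simp_all add: c_def)
  have P: "0 < P" "P < 2" using p \<alpha> \<open>\<alpha> < 1\<close> by (simp_all add: P_def field_simps)
  have "P * c \<le> P" using P c by (simp add: mult_le_cancel_left1)
  hence Pc: "P * c < 2" using P by linarith
  \<comment> \<open>The threshold on \<beta> is exactly where the second stability condition becomes an equality.\<close>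
  have threshold: "q * (1 - \<beta>\<^sub>s) = 2 * (2 - P) / (2 - P * c)"
  proof -
    have "q \<noteq> 0" "c \<noteq> 0" "P * c - 2 \<noteq> 0" "2 - P * c \<noteq> 0" using q c Pc by auto
    moreover have "(1 - \<alpha>) * (1 - a * b) * p - 2 = P * c - 2" by (simp add: P_def c_def)
    hence "\<beta>\<^sub>s = 1 - 2 / (q * c) - 4 * (1 - c) / (q * c * (P * c - 2))"
      unfolding \<beta>\<^sub>s_def by (simp add: c_def mult.assoc)
    ultimately show ?thesis by (simp only:) (simp add: field_simps)
  qed
  have "Q < q * (1 - \<beta>\<^sub>s)" using \<beta> q by (simp add: Q_def)
  hence bound: "Q * (2 - P * c) < 2 * (2 - P)" using threshold Pc by (simp add: less_divide_eq)
  have "0 < q * (1 - \<beta>\<^sub>s)" using threshold P Pc by simp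
  thus "\<beta>\<^sub>s < 1" using q by (simp add: zero_less_mult_iff)
  have "2 * (2 - P) \<le> 2 * (2 - P * c)" using \<open>P * c \<le> P\<close> by simp
  with bound have "Q * (2 - P * c) < 2 * (2 - P * c)" by (rule less_le_trans)
  hence "Q < 2" by (rule mult_right_less_imp_less) (use Pc in simp)
  thus "(1 - \<alpha>) * p + (1 - \<beta>) * q < 4" using P by (simp add: P_def Q_def)
  have "2 - P - Q + P * Q * c / 2 = (2 * (2 - P) - Q * (2 - P * c)) / 2" by (simp add: field_simps)
  thus "2 - (1 - \<alpha>) * p - (1 - \<beta>) * q + (1 - \<alpha>) * p * ((1 - \<beta>) * q) * (1 - a * b) / 2 > 0"
    using bound by (simp add: P_def Q_def c_def)
qed

theorem mainTheorem5:
  fixes a b r s \<alpha> \<beta> :: real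
  assumes "0 < a" "a < 1" "0 < b" "b < 1"
    and "r > a * s" "s > b * r"
    and "0 \<le> \<alpha>" "\<alpha> < 1" "0 \<le> \<beta>" "\<beta> < 1"
  shows
   "(let p = eq_p a b r s; q = eq_q a b r s;
         p\<^sub>\<alpha> = (1 - \<alpha>) * p; q\<^sub>\<beta> = (1 - \<beta>) * q
     in p\<^sub>\<alpha> + q\<^sub>\<beta> < 4 \<and> 2 - p\<^sub>\<alpha> - q\<^sub>\<beta> + p\<^sub>\<alpha> * q\<^sub>\<beta> * (1 - a * b) / 2 > 0
        \<longrightarrow> loc_asym_stable (Tmap a b r s \<alpha> \<beta>) (p, q))
    \<and>
    (let p = eq_p a b r s; q = eq_q a b r s;
         p\<^sub>\<alpha> = (1 - \<alpha>) * p; q\<^sub>\<beta> = (1 - \<beta>) * q;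
         \<alpha>\<^sub>s = max (1 - 2 / p) 0;
         \<beta>\<^sub>s = max (1 - 2 / (q * (1 - a * b))
                   - 4 * a * b / (q * (1 - a * b) * ((1 - \<alpha>) * (1 - a * b) * p - 2))) 0
     in \<alpha>\<^sub>s < \<alpha> \<and> \<beta>\<^sub>s < \<beta>
        \<longrightarrow> 0 \<le> \<beta>\<^sub>s \<and> \<beta>\<^sub>s < 1 \<and>
            p\<^sub>\<alpha> + q\<^sub>\<beta> < 4 \<and> 2 - p\<^sub>\<alpha> - q\<^sub>\<beta> + p\<^sub>\<alpha> * q\<^sub>\<beta> * (1 - a * b) / 2 > 0 \<and>
            loc_asym_stable (Tmap a b r s \<alpha> \<beta>) (p, q))"
proof -
  have a: "a \<noteq> 0" and ab: "0 \<le> a * b" "a * b < 1"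
    using assms mult_strict_mono[of a 1 b 1] by simp_all
  have pq: "0 < eq_p a b r s" "0 < eq_q a b r s" using assms ab by (simp_all add: eq_p_def eq_q_def)
  have PQ: "0 < (1 - \<alpha>) * eq_p a b r s" "0 < (1 - \<beta>) * eq_q a b r s" using assms pq by simp_all
  have equilibrium: "eq_p a b r s + a * eq_q a b r s = r" "b * eq_p a b r s + eq_q a b r s = s"
    using ab by (intro eq_p_eq_q_solve; simp)+
  show ?thesis
    unfolding Let_def
    using Tmap_loc_asym_stable[OF equilibrium a ab PQ]
      stability_conditions_above_thresholds[OF pq ab \<open>\<alpha> < 1\<close>]
    by auto
qed

end
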